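(* Let $p\colon E\to B$ be an arc-hedgehog covering where $E$ and $B$ are Peano spaces. If $B$ is metrizable, then $E$ is metrizable.
   Context: All maps are continuous. A Peano space is a connected, locally path-connected space. For a class $\mathcal{P}$ of spaces, $p\colon E\to B$ is a $\mathcal{P}$-covering if for every $e_0\in E$, $X\in\mathcal{P}$, $x_0\in X$ and map $f\colon X\to B$ with $f(x_0)=p(e_0)$ there is a unique map $g\colon X\to E$ with $p\circ g=f$, $g(x_0)=e_0$. A directed wedge is $(Z,z_0)=\bigvee_{s\in S}(Z_s,z_s)$, a wedge of pointed Peano spaces indexed by a directed set $S$, topologized so that $U\subset Z\setminus\{z_0\}$ is open iff each $U\cap Z_s$ is open, and $U\ni z_0$ is an open neighborhood of $z_0$ iff each $U\cap Z_s$ is open and there is $t\in S$ with $Z_s\subset U$ for all $s>t$. An arc-hedgehog is a directed wedge with each $(Z_s,z_s)\cong([0,1],0)$; an arc-hedgehog covering is a $\mathcal{P}$-covering for $\mathcal{P}$ the class of all arc-hedgehogs. *)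

theory Defs
  imports "HOL-Analysis.Analysis"
begin

definition peano_space :: "'a topology \<Rightarrow> bool" where
  "peano_space X \<longleftrightarrow> connected_space X \<and> locally_path_connected_space X"

definition directed_set :: "'i set \<Rightarrow> ('i \<Rightarrow> 'i \<Rightarrow> bool) \<Rightarrow> bool" where
  "directed_set S le \<longleftrightarrow> S \<noteq> {} \<and> (\<forall>s\<in>S. le s s)
     \<and> (\<forall>r\<in>S. \<forall>s\<in>S. \<forall>t\<in>S. le r s \<longrightarrow> le s t \<longrightarrow> le r t)
     \<and> (\<forall>s\<in>S. \<forall>t\<in>S. \<exists>u\<in>S. le s u \<and> le t u)"

text \<open>Arc-hedgehog over index set S: the wedge of copies of ([0,1],0), one for each s in S.
  Points: the wedge point (None, 0) and (Some s, t) for s in S, 0 < t <= 1.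
  The spoke Z_s is identified with [0,1] via t \<mapsto> hedge_pt s t.\<close>
definition hedge_pt :: "'i \<Rightarrow> real \<Rightarrow> 'i option \<times> real" where
  "hedge_pt s t = (if t = 0 then (None, 0) else (Some s, t))"

definition hedge_carrier :: "'i set \<Rightarrow> ('i option \<times> real) set" where
  "hedge_carrier S = {(None, 0)} \<union> {hedge_pt s t | s t. s \<in> S \<and> t \<in> {0..1}}"

definition hedge_open :: "'i set \<Rightarrow> ('i \<Rightarrow> 'i \<Rightarrow> bool) \<Rightarrow> ('i option \<times> real) set \<Rightarrow> bool" where
  "hedge_open S le U \<longleftrightarrow> U \<subseteq> hedge_carrier S
     \<and> (\<forall>s\<in>S. openin (top_of_set {0..1::real}) {t \<in> {0..1}. hedge_pt s t \<in> U})
     \<and> ((None, 0) \<in> U \<longrightarrow>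
          (\<exists>t\<in>S. \<forall>s\<in>S. le t s \<longrightarrow> (\<forall>x\<in>{0..1}. hedge_pt s x \<in> U)))"

definition arc_hedgehog :: "'i set \<Rightarrow> ('i \<Rightarrow> 'i \<Rightarrow> bool) \<Rightarrow> ('i option \<times> real) topology" where
  "arc_hedgehog S le = topology (hedge_open S le)"

text \<open>P-covering, where P is the class of arc-hedgehogs whose index sets are subsets of the
  type 'i.\<close>
definition arc_hedgehog_covering_idx ::
  "'i itself \<Rightarrow> 'a topology \<Rightarrow> 'b topology \<Rightarrow> ('a \<Rightarrow> 'b) \<Rightarrow> bool" where
  "arc_hedgehog_covering_idx (_ :: 'i itself) E B p \<longleftrightarrow> continuous_map E B p \<and>
     (\<forall>e0\<in>topspace E. \<forall>(S :: 'i set) le. directed_set S le \<longrightarrow>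
        (\<forall>x0\<in>topspace (arc_hedgehog S le). \<forall>f.
           continuous_map (arc_hedgehog S le) B f \<and> f x0 = p e0 \<longrightarrow>
           (\<exists>g. continuous_map (arc_hedgehog S le) E g \<and>
                 (\<forall>x\<in>topspace (arc_hedgehog S le). p (g x) = f x) \<and> g x0 = e0 \<and>
                 (\<forall>g'. continuous_map (arc_hedgehog S le) E g' \<and>
                       (\<forall>x\<in>topspace (arc_hedgehog S le). p (g' x) = f x) \<and> g' x0 = e0
                       \<longrightarrow> (\<forall>x\<in>topspace (arc_hedgehog S le). g' x = g x)))))"

text \<open>Arc-hedgehog covering: index sets range over a universe of cardinality
  at least 2^(|E|+|B|).\<close>
definition arc_hedgehog_covering :: "'a topology \<Rightarrow> 'b topology \<Rightarrow> ('a \<Rightarrow> 'b) \<Rightarrow> bool" where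
  "arc_hedgehog_covering E B p \<longleftrightarrow> arc_hedgehog_covering_idx TYPE(('a + 'b) set) E B p"

lemma istopology_hedge_open:
  assumes d: "directed_set S le"
  shows "istopology (hedge_open S le)"
  unfolding istopology_def
proof safe
  fix U V assume U: "hedge_open S le U" and V: "hedge_open S le V"
  show "hedge_open S le (U \<inter> V)"
    unfolding hedge_open_def
  proof (intro conjI ballI impI)
    show "U \<inter> V \<subseteq> hedge_carrier S" using U unfolding hedge_open_def by blast
  next
    fix s assume "s \<in> S"
    then have "openin (top_of_set {0..1::real}) ({t \<in> {0..1}. hedge_pt s t \<in> U} \<inter> {t \<in> {0..1}. hedge_pt s t \<in> V})"
      using U V unfolding hedge_open_def by blast
    moreover have "{t \<in> {0..1}. hedge_pt s t \<in> U \<inter> V} = {t \<in> {0..1}. hedge_pt s t \<in> U} \<inter> {t \<in> {0..1}. hedge_pt s t \<in> V}" by auto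
    ultimately show "openin (top_of_set {0..1::real}) {t \<in> {0..1}. hedge_pt s t \<in> U \<inter> V}" by simp
  next
    assume "(None, 0) \<in> U \<inter> V"
    then obtain a b where a: "a \<in> S" "\<forall>s\<in>S. le a s \<longrightarrow> (\<forall>x\<in>{0..1}. hedge_pt s x \<in> U)"
      and b: "b \<in> S" "\<forall>s\<in>S. le b s \<longrightarrow> (\<forall>x\<in>{0..1}. hedge_pt s x \<in> V)"
      using U V unfolding hedge_open_def by blast
    obtain c where c: "c \<in> S" "le a c" "le b c" using d a b unfolding directed_set_def by blast
    show "\<exists>t\<in>S. \<forall>s\<in>S. le t s \<longrightarrow> (\<forall>x\<in>{0..1}. hedge_pt s x \<in> U \<inter> V)"
    proof (intro bexI[of _ c] ballI impI)
      fix s x assume s: "s \<in> S" "le c s" and x: "x \<in> {0..1::real}"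
      have tr: "\<And>r s t. r \<in> S \<Longrightarrow> s \<in> S \<Longrightarrow> t \<in> S \<Longrightarrow> le r s \<Longrightarrow> le s t \<Longrightarrow> le r t"
        using d unfolding directed_set_def by blast
      have "le a s" using tr[OF a(1) c(1) s(1) c(2) s(2)] .
      moreover have "le b s" using tr[OF b(1) c(1) s(1) c(3) s(2)] .
      ultimately show "hedge_pt s x \<in> U \<inter> V" using a b s x by blast
    qed (rule c(1))
  qed
next
  fix K assume K: "\<forall>U\<in>K. hedge_open S le U"
  show "hedge_open S le (\<Union>K)"
    unfolding hedge_open_def
  proof (intro conjI ballI impI)
    show "\<Union>K \<subseteq> hedge_carrier S" using K unfolding hedge_open_def by blast
  next
    fix s assume s: "s \<in> S"
    have "{t \<in> {0..1}. hedge_pt s t \<in> \<Union>K} = (\<Union>U\<in>K. {t \<in> {0..1}. hedge_pt s t \<in> U})" by auto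
    moreover have "openin (top_of_set {0..1::real}) (\<Union>U\<in>K. {t \<in> {0..1}. hedge_pt s t \<in> U})"
      using K s unfolding hedge_open_def by blast
    ultimately show "openin (top_of_set {0..1::real}) {t \<in> {0..1}. hedge_pt s t \<in> \<Union>K}" by simp
  next
    assume "(None, 0) \<in> \<Union>K"
    then obtain U where U: "U \<in> K" "(None,0) \<in> U" by blast
    then have "hedge_open S le U" using K by blast
    then obtain t where t: "t \<in> S" "\<forall>s\<in>S. le t s \<longrightarrow> (\<forall>x\<in>{0..1}. hedge_pt s x \<in> U)"
      using U(2) unfolding hedge_open_def by meson
    show "\<exists>t\<in>S. \<forall>s\<in>S. le t s \<longrightarrow> (\<forall>x\<in>{0..1}. hedge_pt s x \<in> \<Union>K)"
      using t U(1) by blast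
  qed
qed

end

theory Submission
  imports Defs
begin

text \<open>Measure the distance of two points of E by the least diameter, in the base, of the
  projection of a path-connected set containing both. Since E is locally path-connected, every
  ball of this pseudometric is a neighbourhood in E of its centre. Conversely, lifting along arc-hedgehogs shows that paths
  starting at x whose projections converge uniformly to p x eventually stay in any neighbourhood
  of x: countably many such paths form a continuous map out of a hedgehog, and its unique lift
  agrees spokewise with the paths. So points at small distance from x are close to x in E, which
  shows that the two topologies agree and, since E is T0 by unique path lifting, that the
  pseudometric is a metric.\<close>

section \<open>Arc-hedgehogs\<close>

lemma hedge_carrier_iff:
  "x \<in> hedge_carrier S \<longleftrightarrow> x = (None, 0) \<or> (\<exists>s\<in>S. \<exists>t. 0 < t \<and> t \<le> 1 \<and> x = (Some s, t))"
proof
  assume "x \<in> hedge_carrier S"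
  then show "x = (None, 0) \<or> (\<exists>s\<in>S. \<exists>t. 0 < t \<and> t \<le> 1 \<and> x = (Some s, t))"
    unfolding hedge_carrier_def hedge_pt_def by (auto split: if_splits)
next
  assume "x = (None, 0) \<or> (\<exists>s\<in>S. \<exists>t. 0 < t \<and> t \<le> 1 \<and> x = (Some s, t))"
  then show "x \<in> hedge_carrier S"
    unfolding hedge_carrier_def hedge_pt_def by force
qed

lemma hedge_pt_in_hedge_carrier: "s \<in> S \<Longrightarrow> t \<in> {0..1} \<Longrightarrow> hedge_pt s t \<in> hedge_carrier S"
  unfolding hedge_carrier_def by blast

lemma openin_arc_hedgehog:
  assumes "directed_set S le"
  shows "openin (arc_hedgehog S le) U \<longleftrightarrow> hedge_open S le U"
  unfolding arc_hedgehog_def using topology_inverse'[OF istopology_hedge_open[OF assms]] by simp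

lemma topspace_arc_hedgehog:
  assumes "directed_set S le"
  shows "topspace (arc_hedgehog S le) = hedge_carrier S"
proof -
  obtain s where "s \<in> S" using assms unfolding directed_set_def by blast
  moreover have "{t \<in> {0..1::real}. hedge_pt s t \<in> hedge_carrier S} = {0..1}" if "s \<in> S" for s
    using hedge_pt_in_hedge_carrier[OF that] by auto
  ultimately have "hedge_open S le (hedge_carrier S)"
    unfolding hedge_open_def by (auto intro: hedge_pt_in_hedge_carrier)
  then show ?thesis
    unfolding topspace_def openin_arc_hedgehog[OF assms] hedge_open_def by blast
qed

definition hedgehog_map :: "'x \<Rightarrow> ('i \<Rightarrow> real \<Rightarrow> 'x) \<Rightarrow> 'i option \<times> real \<Rightarrow> 'x" where
  "hedgehog_map e \<alpha> x = (case fst x of None \<Rightarrow> e | Some s \<Rightarrow> \<alpha> s (snd x))"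

lemma hedgehog_map_base [simp]: "hedgehog_map e \<alpha> (None, 0) = e"
  by (simp add: hedgehog_map_def)

lemma hedgehog_map_hedge_pt: "\<alpha> s 0 = e \<Longrightarrow> hedgehog_map e \<alpha> (hedge_pt s t) = \<alpha> s t"
  by (simp add: hedgehog_map_def hedge_pt_def)

lemma continuous_map_hedgehog_map:
  assumes d: "directed_set S le"
    and paths: "\<And>s. s \<in> S \<Longrightarrow> pathin X (\<alpha> s)"
    and start: "\<And>s. s \<in> S \<Longrightarrow> \<alpha> s 0 = e"
    and e: "e \<in> topspace X"
    and converge: "\<And>W. openin X W \<Longrightarrow> e \<in> W \<Longrightarrow>
                     \<exists>t\<in>S. \<forall>s\<in>S. le t s \<longrightarrow> (\<forall>x\<in>{0..1}. \<alpha> s x \<in> W)"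
  shows "continuous_map (arc_hedgehog S le) X (hedgehog_map e \<alpha>)"
  unfolding continuous_map_def topspace_arc_hedgehog[OF d] openin_arc_hedgehog[OF d]
proof (intro conjI allI impI)
  show "hedgehog_map e \<alpha> \<in> hedge_carrier S \<rightarrow> topspace X"
  proof
    fix x assume "x \<in> hedge_carrier S"
    then consider "x = (None, 0)" | s t where "s \<in> S" "0 < t" "t \<le> 1" "x = (Some s, t)"
      unfolding hedge_carrier_iff by blast
    then show "hedgehog_map e \<alpha> x \<in> topspace X"
    proof cases
      case (2 s t)
      then show ?thesis
        using path_image_subset_topspace[OF paths[OF \<open>s \<in> S\<close>]] by (auto simp: hedgehog_map_def)
    qed (use e in simp)
  qed
next
  fix W assume W: "openin X W"
  let ?P = "{x \<in> hedge_carrier S. hedgehog_map e \<alpha> x \<in> W}"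
  have spoke: "{t \<in> {0..1}. hedge_pt s t \<in> ?P} = {t \<in> topspace (top_of_set {0..1}). \<alpha> s t \<in> W}"
    if "s \<in> S" for s
    using hedge_pt_in_hedge_carrier[OF that] hedgehog_map_hedge_pt[of \<alpha> s e, OF start[OF that]] by auto
  show "hedge_open S le ?P"
    unfolding hedge_open_def
  proof (intro conjI ballI impI)
    fix s assume s: "s \<in> S"
    show "openin (top_of_set {0..1::real}) {t \<in> {0..1}. hedge_pt s t \<in> ?P}"
      unfolding spoke[OF s] using paths[OF s] W unfolding pathin_def
      by (rule openin_continuous_map_preimage)
  next
    assume "(None, 0) \<in> ?P"
    then have "e \<in> W" by simp
    then obtain t where t: "t \<in> S" "\<forall>s\<in>S. le t s \<longrightarrow> (\<forall>x\<in>{0..1}. \<alpha> s x \<in> W)"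
      using converge[OF W] by blast
    show "\<exists>t\<in>S. \<forall>s\<in>S. le t s \<longrightarrow> (\<forall>x\<in>{0..1}. hedge_pt s x \<in> ?P)"
    proof (intro bexI[OF _ t(1)] ballI impI)
      fix s x assume "s \<in> S" "le t s" "x \<in> {0..1::real}"
      then show "hedge_pt s x \<in> ?P"
        using t(2) hedge_pt_in_hedge_carrier hedgehog_map_hedge_pt[of \<alpha> s e, OF start] by simp
    qed
  qed blast
qed

lemma pathin_spoke:
  assumes d: "directed_set S le" and s: "s \<in> S"
    and g: "continuous_map (arc_hedgehog S le) X g"
  shows "pathin X (\<lambda>t. g (hedge_pt s t))"
proof -
  have "continuous_map (top_of_set {0..1}) (arc_hedgehog S le) (hedge_pt s)"
    unfolding continuous_map_def topspace_arc_hedgehog[OF d] openin_arc_hedgehog[OF d]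
    using hedge_pt_in_hedge_carrier[OF s] s by (auto simp: hedge_open_def)
  then show ?thesis
    using continuous_map_compose[OF _ g] unfolding pathin_def o_def by blast
qed

section \<open>Lifting along arc-hedgehogs\<close>

lemma arc_hedgehog_covering_imp_continuous_map:
  "arc_hedgehog_covering E B p \<Longrightarrow> continuous_map E B p"
  unfolding arc_hedgehog_covering_def arc_hedgehog_covering_idx_def by blast

lemma arc_hedgehog_covering_lift:
  fixes E :: "'a topology" and B :: "'b topology" and S :: "('a + 'b) set set"
  assumes "arc_hedgehog_covering E B p" "e0 \<in> topspace E" "directed_set S le"
    "x0 \<in> topspace (arc_hedgehog S le)" "continuous_map (arc_hedgehog S le) B f" "f x0 = p e0"
  shows "\<exists>g. continuous_map (arc_hedgehog S le) E g \<and>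
           (\<forall>x\<in>topspace (arc_hedgehog S le). p (g x) = f x) \<and> g x0 = e0 \<and>
           (\<forall>g'. continuous_map (arc_hedgehog S le) E g' \<and>
              (\<forall>x\<in>topspace (arc_hedgehog S le). p (g' x) = f x) \<and> g' x0 = e0
              \<longrightarrow> (\<forall>x\<in>topspace (arc_hedgehog S le). g' x = g x))"
  using assms unfolding arc_hedgehog_covering_def arc_hedgehog_covering_idx_def by blast

text \<open>Each path becomes the first spoke of a two-spoke hedgehog whose terminal spoke is constant,
  which makes continuity at the wedge point automatic; both maps lift the same map.\<close>
lemma arc_hedgehog_covering_unique_path_lifting:
  fixes E :: "'a topology" and B :: "'b topology"
  assumes cov: "arc_hedgehog_covering E B p"
    and \<beta>: "pathin E \<beta>" and \<gamma>: "pathin E \<gamma>" and start: "\<beta> 0 = \<gamma> 0"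
    and same_projection: "\<And>t. t \<in> {0..1} \<Longrightarrow> p (\<beta> t) = p (\<gamma> t)"
    and t: "t \<in> {0..1}"
  shows "\<beta> t = \<gamma> t"
proof -
  define S :: "('a + 'b) set set" where "S = {{}, UNIV}"
  define le :: "('a + 'b) set \<Rightarrow> ('a + 'b) set \<Rightarrow> bool" where "le = (\<lambda>a b. a = {} \<or> b = UNIV)"
  have d: "directed_set S le" unfolding directed_set_def S_def le_def by auto
  define e where "e = \<beta> 0"
  have e: "e \<in> topspace E" using \<beta> path_start_in_topspace unfolding e_def by blast
  define spokes :: "(real \<Rightarrow> 'a) \<Rightarrow> ('a + 'b) set \<Rightarrow> real \<Rightarrow> 'a"
    where "spokes = (\<lambda>\<alpha> s. if s = {} then \<alpha> else (\<lambda>_. e))"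
  have cont: "continuous_map (arc_hedgehog S le) E (hedgehog_map e (spokes \<alpha>))"
    if "pathin E \<alpha>" "\<alpha> 0 = e" for \<alpha>
  proof (rule continuous_map_hedgehog_map[OF d _ _ e])
    fix W assume "openin E W" "e \<in> W"
    then show "\<exists>t\<in>S. \<forall>s\<in>S. le t s \<longrightarrow> (\<forall>x\<in>{0..1}. spokes \<alpha> s x \<in> W)"
      by (intro bexI[of _ UNIV]) (auto simp: S_def le_def spokes_def)
  qed (use that e in \<open>auto simp: S_def spokes_def\<close>)
  have x0: "(None, 0) \<in> topspace (arc_hedgehog S le)"
    unfolding topspace_arc_hedgehog[OF d] hedge_carrier_def by blast
  have f: "continuous_map (arc_hedgehog S le) B (p \<circ> hedgehog_map e (spokes \<beta>))"
    using cont[OF \<beta>] arc_hedgehog_covering_imp_continuous_map[OF cov]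
    by (simp add: e_def continuous_map_compose)
  obtain g where unique: "\<forall>g'. continuous_map (arc_hedgehog S le) E g' \<and>
       (\<forall>x\<in>topspace (arc_hedgehog S le). p (g' x) = (p \<circ> hedgehog_map e (spokes \<beta>)) x) \<and>
       g' (None, 0) = e \<longrightarrow> (\<forall>x\<in>topspace (arc_hedgehog S le). g' x = g x)"
    using arc_hedgehog_covering_lift[OF cov e d x0 f] by auto
  have \<beta>_lift: "continuous_map (arc_hedgehog S le) E (hedgehog_map e (spokes \<beta>))"
    and \<gamma>_lift: "continuous_map (arc_hedgehog S le) E (hedgehog_map e (spokes \<gamma>))"
    using cont \<beta> \<gamma> by (auto simp: e_def start)
  have same_base: "\<forall>x\<in>topspace (arc_hedgehog S le). p (hedgehog_map e (spokes \<gamma>) x) = (p \<circ> hedgehog_map e (spokes \<beta>)) x"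
    using same_projection
    by (auto simp: topspace_arc_hedgehog[OF d] hedge_carrier_iff hedgehog_map_def spokes_def)
  have "hedgehog_map e (spokes \<beta>) x = hedgehog_map e (spokes \<gamma>) x"
    if "x \<in> topspace (arc_hedgehog S le)" for x
    using unique[rule_format, of "hedgehog_map e (spokes \<beta>)"] \<beta>_lift
      unique[rule_format, of "hedgehog_map e (spokes \<gamma>)"] \<gamma>_lift same_base that
    by simp
  moreover have "hedge_pt {} t \<in> topspace (arc_hedgehog S le)"
    unfolding topspace_arc_hedgehog[OF d] using t by (auto simp: S_def intro: hedge_pt_in_hedge_carrier)
  ultimately have "hedgehog_map e (spokes \<beta>) (hedge_pt {} t) = hedgehog_map e (spokes \<gamma>) (hedge_pt {} t)"
    by blast
  then show ?thesis
    by (simp add: hedgehog_map_hedge_pt spokes_def e_def start)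
qed

lemma pathin_indistinguishable_jump:
  assumes "x \<in> topspace X" "y \<in> topspace X" and indist: "\<And>U. openin X U \<Longrightarrow> x \<in> U \<longleftrightarrow> y \<in> U"
  shows "pathin X (\<lambda>t. if t = 0 then x else y)"
  unfolding pathin_def continuous_map_def
proof (intro conjI allI impI)
  show "(\<lambda>t. if t = 0 then x else y) \<in> topspace (top_of_set {0..1}) \<rightarrow> topspace X"
    using assms by auto
next
  fix W assume W: "openin X W"
  show "openin (top_of_set {0..1}) {t \<in> topspace (top_of_set {0..1}). (if t = 0 then x else y) \<in> W}"
  proof (cases "x \<in> W")
    case True
    then have eq: "{t \<in> topspace (top_of_set {0..1}). (if t = 0 then x else y) \<in> W} = topspace (top_of_set {0..1})"
      using indist[OF W] by auto
    show ?thesis unfolding eq by (rule openin_topspace)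
  next
    case False
    then have eq: "{t \<in> topspace (top_of_set {0..1}). (if t = 0 then x else y) \<in> W} = {}"
      using indist[OF W] by auto
    show ?thesis unfolding eq by (rule openin_empty)
  qed
qed

text \<open>Topologically indistinguishable points of E lie in one fibre, and jumping from one to the
  other is a path lifting a constant path.\<close>
lemma arc_hedgehog_covering_t0_space:
  assumes cov: "arc_hedgehog_covering E B p" and "t0_space B"
  shows "t0_space E"
  unfolding t0_space_def
proof (intro ballI impI)
  fix x y assume x: "x \<in> topspace E" and y: "y \<in> topspace E" and "x \<noteq> y"
  have p: "continuous_map E B p" by (rule arc_hedgehog_covering_imp_continuous_map[OF cov])
  show "\<exists>U. openin E U \<and> (x \<notin> U \<longleftrightarrow> y \<in> U)"
  proof (rule ccontr)
    assume "\<nexists>U. openin E U \<and> (x \<notin> U \<longleftrightarrow> y \<in> U)"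
    then have indist: "\<And>U. openin E U \<Longrightarrow> x \<in> U \<longleftrightarrow> y \<in> U" by blast
    have "p x = p y"
    proof (rule ccontr)
      assume "p x \<noteq> p y"
      moreover have "p x \<in> topspace B" "p y \<in> topspace B"
        using p x y by (auto simp: continuous_map_def)
      ultimately obtain V where V: "openin B V" "p x \<notin> V \<longleftrightarrow> p y \<in> V"
        using \<open>t0_space B\<close> unfolding t0_space_def by blast
      have "openin E {z \<in> topspace E. p z \<in> V}"
        using p V(1) by (rule openin_continuous_map_preimage)
      then have "p x \<in> V \<longleftrightarrow> p y \<in> V"
        using indist x y by auto
      then show False using V(2) by blast
    qed
    have jump: "pathin E (\<lambda>t. if t = 0 then x else y)"
      using x y indist by (rule pathin_indistinguishable_jump)
    have same_projection: "p (if t = 0 then x else y) = p x" for t :: real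
      using \<open>p x = p y\<close> by simp
    have "(if (1::real) = 0 then x else y) = x"
      by (rule arc_hedgehog_covering_unique_path_lifting
          [OF cov jump pathin_const[THEN iffD2, OF x] _ same_projection]) simp_all
    then show False using \<open>x \<noteq> y\<close> by simp
  qed
qed

text \<open>A hedgehog of paths in E is continuous as soon as its projection is: the projection lifts,
  and by unique path lifting the lift restricts to the given paths on the spokes.\<close>
lemma arc_hedgehog_covering_continuous_map_hedgehog_map:
  fixes E :: "'a topology" and B :: "'b topology" and S :: "('a + 'b) set set"
  assumes cov: "arc_hedgehog_covering E B p" and d: "directed_set S le"
    and x: "x \<in> topspace E"
    and paths: "\<And>s. s \<in> S \<Longrightarrow> pathin E (\<alpha> s)" and start: "\<And>s. s \<in> S \<Longrightarrow> \<alpha> s 0 = x"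
    and converge: "\<And>W. openin B W \<Longrightarrow> p x \<in> W \<Longrightarrow>
                     \<exists>t\<in>S. \<forall>s\<in>S. le t s \<longrightarrow> (\<forall>u\<in>{0..1}. p (\<alpha> s u) \<in> W)"
  shows "continuous_map (arc_hedgehog S le) E (hedgehog_map x \<alpha>)"
proof -
  have p: "continuous_map E B p" by (rule arc_hedgehog_covering_imp_continuous_map[OF cov])
  have px: "p x \<in> topspace B" using x p by (auto simp: continuous_map_def)
  have f: "continuous_map (arc_hedgehog S le) B (hedgehog_map (p x) (\<lambda>s t. p (\<alpha> s t)))"
  proof (rule continuous_map_hedgehog_map[OF d _ _ px converge])
    fix s assume "s \<in> S"
    then show "pathin B (\<lambda>t. p (\<alpha> s t))"
      using pathin_compose[OF paths p] by (simp add: o_def)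
  qed (simp_all add: start)
  have x0: "(None, 0) \<in> topspace (arc_hedgehog S le)"
    unfolding topspace_arc_hedgehog[OF d] hedge_carrier_def by blast
  obtain g where g: "continuous_map (arc_hedgehog S le) E g"
    and g_lifts: "\<forall>y\<in>topspace (arc_hedgehog S le). p (g y) = hedgehog_map (p x) (\<lambda>s t. p (\<alpha> s t)) y"
    and g0: "g (None, 0) = x"
    using arc_hedgehog_covering_lift[OF cov x d x0 f] by auto
  have spoke: "\<alpha> s t = g (hedge_pt s t)" if s: "s \<in> S" and t: "t \<in> {0..1}" for s t
  proof (rule arc_hedgehog_covering_unique_path_lifting[OF cov paths[OF s] pathin_spoke[OF d s g] _ _ t])
    show "\<alpha> s 0 = g (hedge_pt s 0)" by (simp add: start[OF s] hedge_pt_def g0)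
  next
    fix u :: real assume u: "u \<in> {0..1}"
    have "p (g (hedge_pt s u)) = hedgehog_map (p x) (\<lambda>s t. p (\<alpha> s t)) (hedge_pt s u)"
      using g_lifts hedge_pt_in_hedge_carrier[OF s u] topspace_arc_hedgehog[OF d] by auto
    also have "\<dots> = p (\<alpha> s u)"
      by (simp add: hedgehog_map_hedge_pt start[OF s])
    finally show "p (\<alpha> s u) = p (g (hedge_pt s u))" by simp
  qed
  have "g y = hedgehog_map x \<alpha> y" if "y \<in> topspace (arc_hedgehog S le)" for y
  proof -
    from that consider "y = (None, 0)" | s t where "s \<in> S" "0 < t" "t \<le> 1" "y = hedge_pt s t"
      unfolding topspace_arc_hedgehog[OF d] hedge_carrier_iff by (auto simp: hedge_pt_def)
    then show ?thesis
    proof cases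
      case (2 s t)
      then show ?thesis using spoke[of s t] by (simp add: hedgehog_map_hedge_pt start)
    qed (simp add: g0)
  qed
  with g show ?thesis by (rule continuous_map_eq)
qed

lemma directed_set_range_nat:
  fixes h :: "nat \<Rightarrow> 'i"
  assumes "inj h"
  shows "directed_set (range h) (\<lambda>a b. inv h a \<le> inv h b)"
  unfolding directed_set_def using assms
  by (auto simp: inv_f_f) (metis inv_f_f max.cobounded1 max.cobounded2)

lemma arc_hedgehog_covering_paths_converge:
  fixes E :: "'a topology" and B :: "'b topology" and A :: "nat \<Rightarrow> real \<Rightarrow> 'a"
  assumes cov: "arc_hedgehog_covering E B p" and t1: "t1_space B"
    and x: "x \<in> topspace E"
    and paths: "\<And>n. pathin E (A n)" and start: "\<And>n. A n 0 = x"
    and converge: "\<And>W. openin B W \<Longrightarrow> p x \<in> W \<Longrightarrow> \<exists>N. \<forall>n\<ge>N. \<forall>t\<in>{0..1}. p (A n t) \<in> W"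
    and U: "openin E U" "x \<in> U"
  shows "\<exists>N. \<forall>n\<ge>N. \<forall>t\<in>{0..1}. A n t \<in> U"
proof (cases "finite (UNIV :: ('a + 'b) set)")
  case True
  \<comment> \<open>Countably many distinct spokes need an infinite index type; otherwise B is finite, hence
    discrete, and the projected paths are eventually constant.\<close>
  have px: "p x \<in> topspace B"
    using x arc_hedgehog_covering_imp_continuous_map[OF cov] by (auto simp: continuous_map_def)
  have "finite (range (Inr :: 'b \<Rightarrow> 'a + 'b))" using True by (rule finite_subset[OF subset_UNIV])
  then have "finite (topspace B)" by (auto dest: finite_imageD intro: finite_subset[OF subset_UNIV])
  then have "B = discrete_topology (topspace B)"
    using finite_t1_space_imp_discrete_topology[OF refl _ t1] by blast
  then have "openin B {p x}" using px by (metis discrete_topology_unique empty_subsetI insert_subset)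
  then obtain N where N: "\<forall>n\<ge>N. \<forall>t\<in>{0..1}. p (A n t) \<in> {p x}" using converge by blast
  have "A n t = x" if "n \<ge> N" "t \<in> {0..1}" for n t
    using arc_hedgehog_covering_unique_path_lifting[OF cov paths[of n], of "\<lambda>_. x"] x start N that
    by auto
  then show ?thesis using U by blast
next
  case False
  then obtain c :: "nat \<Rightarrow> 'a + 'b" where "inj c"
    using infinite_countable_subset by blast
  define h where "h = (\<lambda>n. {c n})"
  have "inj h" using \<open>inj c\<close> unfolding h_def inj_def by blast
  then have h_inv [simp]: "inv h (h n) = n" for n by simp
  let ?le = "\<lambda>a b. inv h a \<le> inv h b"
  have d: "directed_set (range h) ?le" using \<open>inj h\<close> by (rule directed_set_range_nat)
  have g: "continuous_map (arc_hedgehog (range h) ?le) E (hedgehog_map x (\<lambda>s. A (inv h s)))"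
  proof (rule arc_hedgehog_covering_continuous_map_hedgehog_map[OF cov d x])
    fix W assume "openin B W" "p x \<in> W"
    then obtain N where "\<forall>n\<ge>N. \<forall>t\<in>{0..1}. p (A n t) \<in> W" using converge by blast
    then show "\<exists>t\<in>range h. \<forall>s\<in>range h. ?le t s \<longrightarrow> (\<forall>u\<in>{0..1}. p (A (inv h s) u) \<in> W)"
      by (intro bexI[of _ "h N"]) auto
  qed (auto simp: paths start)
  let ?G = "{y \<in> topspace (arc_hedgehog (range h) ?le). hedgehog_map x (\<lambda>s. A (inv h s)) y \<in> U}"
  have "openin (arc_hedgehog (range h) ?le) ?G"
    using g U(1) by (rule openin_continuous_map_preimage)
  moreover have "(None, 0) \<in> ?G"
    using U(2) unfolding topspace_arc_hedgehog[OF d] hedge_carrier_def by simp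
  ultimately obtain s where "s \<in> range h" "\<forall>s'\<in>range h. ?le s s' \<longrightarrow> (\<forall>y\<in>{0..1}. hedge_pt s' y \<in> ?G)"
    unfolding openin_arc_hedgehog[OF d] hedge_open_def by blast
  then obtain N where "\<forall>n\<ge>N. \<forall>t\<in>{0..1}. hedgehog_map x (\<lambda>s. A (inv h s)) (hedge_pt (h n) t) \<in> U"
    by auto
  then show ?thesis by (auto simp: hedgehog_map_hedge_pt start)
qed

section \<open>The lifted metric\<close>

text \<open>Path-connected sets are used instead of paths so that concatenation becomes a union.\<close>
definition path_diameter_bounds ::
  "'a topology \<Rightarrow> ('a \<Rightarrow> 'b) \<Rightarrow> ('b \<Rightarrow> 'b \<Rightarrow> real) \<Rightarrow> 'a \<Rightarrow> 'a \<Rightarrow> real set" where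
  "path_diameter_bounds E p d x y =
     {r. \<exists>T. path_connectedin E T \<and> x \<in> T \<and> y \<in> T \<and> (\<forall>u\<in>T. \<forall>v\<in>T. d (p u) (p v) \<le> r)}"

definition path_diameter_dist :: "'a topology \<Rightarrow> ('a \<Rightarrow> 'b) \<Rightarrow> ('b \<Rightarrow> 'b \<Rightarrow> real) \<Rightarrow> 'a \<Rightarrow> 'a \<Rightarrow> real" where
  "path_diameter_dist E p d x y =
     (if x \<in> topspace E \<and> y \<in> topspace E then Inf (path_diameter_bounds E p d x y) else 0)"

locale arc_hedgehog_covering_of_metric = Metric_space M d for M :: "'b set" and d +
  fixes E :: "'a topology" and p :: "'a \<Rightarrow> 'b"
  assumes covering: "arc_hedgehog_covering E mtopology p"
    and path_connected: "path_connected_space E"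
begin

lemma continuous_map_p: "continuous_map E mtopology p"
  using covering by (rule arc_hedgehog_covering_imp_continuous_map)

lemma p_in_M: "x \<in> topspace E \<Longrightarrow> p x \<in> M"
  using continuous_map_p by (auto simp: continuous_map_def)

lemma path_diameter_bounds_nonneg: "r \<in> path_diameter_bounds E p d x y \<Longrightarrow> 0 \<le> r"
  unfolding path_diameter_bounds_def using nonneg order_trans by blast

lemma path_diameter_bounds_nonempty:
  assumes "x \<in> topspace E" "y \<in> topspace E"
  shows "path_diameter_bounds E p d x y \<noteq> {}"
proof -
  obtain \<alpha> where \<alpha>: "pathin E \<alpha>" "\<alpha> 0 = x" "\<alpha> 1 = y"
    using path_connected assms unfolding path_connected_space_def by blast
  have "compactin mtopology (p ` \<alpha> ` {0..1})"
    using compactin_path_image[OF pathin_compose[OF \<alpha>(1) continuous_map_p]] by (simp add: image_comp)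
  then obtain C where "\<forall>u\<in>p ` \<alpha> ` {0..1}. \<forall>v\<in>p ` \<alpha> ` {0..1}. d u v \<le> C"
    using compactin_imp_mbounded mbounded_alt by blast
  moreover have "x \<in> \<alpha> ` {0..1}" "y \<in> \<alpha> ` {0..1}"
    using \<alpha> by (auto intro: image_eqI[of _ _ 0] image_eqI[of _ _ 1])
  ultimately have "C \<in> path_diameter_bounds E p d x y"
    unfolding path_diameter_bounds_def using path_connectedin_path_image[OF \<alpha>(1)] by blast
  then show ?thesis by blast
qed

lemma path_diameter_bounds_commute:
  "path_diameter_bounds E p d x y = path_diameter_bounds E p d y x"
  unfolding path_diameter_bounds_def by blast

lemma path_diameter_bounds_add:
  assumes "r \<in> path_diameter_bounds E p d x y" "s \<in> path_diameter_bounds E p d y z"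
  shows "r + s \<in> path_diameter_bounds E p d x z"
proof -
  obtain T where T: "path_connectedin E T" "x \<in> T" "y \<in> T" "\<forall>u\<in>T. \<forall>v\<in>T. d (p u) (p v) \<le> r"
    using assms(1) unfolding path_diameter_bounds_def by blast
  obtain T' where T': "path_connectedin E T'" "y \<in> T'" "z \<in> T'" "\<forall>u\<in>T'. \<forall>v\<in>T'. d (p u) (p v) \<le> s"
    using assms(2) unfolding path_diameter_bounds_def by blast
  have in_M: "p u \<in> M" if "u \<in> T \<union> T'" for u
    using that T(1) T'(1) path_connectedin_subset_topspace p_in_M by blast
  have across: "d (p u) (p v) \<le> r + s" if "u \<in> T" "v \<in> T'" for u v
  proof -
    have "d (p u) (p v) \<le> d (p u) (p y) + d (p y) (p v)"
      using triangle in_M that T(3) by blast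
    also have "\<dots> \<le> r + s" using T(4) T'(4) that T(3) T'(2) by (intro add_mono) auto
    finally show ?thesis .
  qed
  have "d (p u) (p v) \<le> r + s" if "u \<in> T \<union> T'" "v \<in> T \<union> T'" for u v
  proof -
    have "0 \<le> r" "0 \<le> s"
      using assms path_diameter_bounds_nonneg by blast+
    then show ?thesis
      using that T(4) T'(4) across across[of v u] commute[of "p u" "p v"] by fastforce
  qed
  moreover have "path_connectedin E (T \<union> T')"
    using T(1,3) T'(1,2) by (blast intro: path_connectedin_Un)
  ultimately show ?thesis
    unfolding path_diameter_bounds_def using T(2) T'(3) by blast
qed

lemma path_diameter_dist_le:
  assumes "x \<in> topspace E" "y \<in> topspace E" "r \<in> path_diameter_bounds E p d x y"
  shows "path_diameter_dist E p d x y \<le> r"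
proof -
  have "bdd_below (path_diameter_bounds E p d x y)"
    using path_diameter_bounds_nonneg by (rule bdd_belowI)
  then show ?thesis
    using assms unfolding path_diameter_dist_def by (simp add: cInf_lower)
qed

lemma path_diameter_dist_lessE:
  assumes "x \<in> topspace E" "y \<in> topspace E" "path_diameter_dist E p d x y < e"
  obtains r where "r \<in> path_diameter_bounds E p d x y" "r < e"
  using cInf_lessD[OF path_diameter_bounds_nonempty[OF assms(1,2)]] assms(3)
  unfolding path_diameter_dist_def by (auto simp: assms(1,2))

lemma small_path_connectedin_subset:
  assumes U: "openin E U" "x \<in> U"
  obtains \<epsilon> where "\<epsilon> > 0"
    "\<And>T. path_connectedin E T \<Longrightarrow> x \<in> T \<Longrightarrow> (\<And>u. u \<in> T \<Longrightarrow> d (p u) (p x) < \<epsilon>) \<Longrightarrow> T \<subseteq> U"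
proof (rule ccontr)
  assume "\<not> thesis"
  with that have "\<exists>T. path_connectedin E T \<and> x \<in> T \<and> (\<forall>u\<in>T. d (p u) (p x) < 1 / Suc n) \<and> \<not> T \<subseteq> U"
    for n by (metis of_nat_0_less_iff zero_less_Suc zero_less_divide_1_iff)
  then have "\<exists>\<alpha>. pathin E \<alpha> \<and> \<alpha> 0 = x \<and> (\<forall>t\<in>{0..1}. d (p (\<alpha> t)) (p x) < 1 / Suc n) \<and> \<alpha> 1 \<notin> U"
    for n unfolding path_connectedin by (metis Pi_mem atLeastAtMost_iff subsetI zero_le_one order_refl)
  then obtain A where A: "\<And>n. pathin E (A n)" "\<And>n. A n 0 = x" "\<And>n. A n 1 \<notin> U"
    and close: "\<And>n t. t \<in> {0..1} \<Longrightarrow> d (p (A n t)) (p x) < 1 / Suc n"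
    by metis
  have x: "x \<in> topspace E" using U openin_subset by blast
  have "\<exists>N. \<forall>n\<ge>N. \<forall>t\<in>{0..1}. A n t \<in> U"
  proof (rule arc_hedgehog_covering_paths_converge[OF covering _ x A(1,2) _ U])
    show "t1_space mtopology" by (rule Hausdorff_imp_t1_space[OF Hausdorff_space_mtopology])
  next
    fix W assume W: "openin mtopology W" "p x \<in> W"
    then obtain r where r: "r > 0" "mball (p x) r \<subseteq> W" unfolding openin_mtopology by blast
    then obtain N where N: "1 / Suc N < r" using reals_Archimedean by (auto simp: inverse_eq_divide)
    have "p (A n t) \<in> W" if "N \<le> n" "t \<in> {0..1}" for n t
    proof -
      have "d (p (A n t)) (p x) < 1 / Suc n" using close that(2) .
      also have "\<dots> \<le> 1 / Suc N" using that(1) by (simp add: frac_le)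
      finally have "d (p x) (p (A n t)) < r" using N commute by simp
      moreover have "p (A n t) \<in> M"
        using p_in_M path_image_subset_topspace[OF A(1)] that(2) by blast
      ultimately show ?thesis using r p_in_M[OF x] by auto
    qed
    then show "\<exists>N. \<forall>n\<ge>N. \<forall>t\<in>{0..1}. p (A n t) \<in> W" by blast
  qed
  then show False using A(3) by force
qed

lemma path_diameter_dist_nonneg: "0 \<le> path_diameter_dist E p d x y"
  unfolding path_diameter_dist_def
  using path_diameter_bounds_nonempty path_diameter_bounds_nonneg by (auto intro: cInf_greatest)

lemma path_diameter_dist_commute: "path_diameter_dist E p d x y = path_diameter_dist E p d y x"
  unfolding path_diameter_dist_def path_diameter_bounds_commute[of x y] by auto

lemma path_diameter_dist_self: "x \<in> topspace E \<Longrightarrow> path_diameter_dist E p d x x = 0"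
  using path_diameter_dist_le[of x x 0] path_diameter_dist_nonneg[of x x] p_in_M[of x]
  unfolding path_diameter_bounds_def by (force intro!: exI[of _ "{x}"])

lemma path_diameter_dist_small_imp_in:
  assumes "openin E U" "x \<in> U"
  obtains \<epsilon> where "\<epsilon> > 0" "\<And>y. y \<in> topspace E \<Longrightarrow> path_diameter_dist E p d x y < \<epsilon> \<Longrightarrow> y \<in> U"
proof -
  have x: "x \<in> topspace E" using assms openin_subset by blast
  obtain \<epsilon> where "\<epsilon> > 0" and small: "\<And>T. path_connectedin E T \<Longrightarrow> x \<in> T \<Longrightarrow>
      (\<And>u. u \<in> T \<Longrightarrow> d (p u) (p x) < \<epsilon>) \<Longrightarrow> T \<subseteq> U"
    using small_path_connectedin_subset[OF assms] by blast
  have "y \<in> U" if y: "y \<in> topspace E" and "path_diameter_dist E p d x y < \<epsilon>" for y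
  proof -
    obtain r where "r \<in> path_diameter_bounds E p d x y" "r < \<epsilon>"
      using path_diameter_dist_lessE[OF x y] \<open>path_diameter_dist E p d x y < \<epsilon>\<close> by blast
    then obtain T where "path_connectedin E T" "x \<in> T" "y \<in> T" "\<forall>u\<in>T. \<forall>v\<in>T. d (p u) (p v) \<le> r"
      unfolding path_diameter_bounds_def by blast
    with small \<open>r < \<epsilon>\<close> show "y \<in> U" by fastforce
  qed
  with \<open>\<epsilon> > 0\<close> that show ?thesis by blast
qed

lemma path_diameter_dist_eq_0_imp_eq:
  assumes x: "x \<in> topspace E" and y: "y \<in> topspace E" and "path_diameter_dist E p d x y = 0"
  shows "x = y"
proof -
  have near: "b \<in> U"
    if "b \<in> topspace E" "path_diameter_dist E p d a b = 0" "openin E U" "a \<in> U" for a b U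
    using path_diameter_dist_small_imp_in[OF that(3,4)] that(1,2) by metis
  have "path_diameter_dist E p d y x = 0"
    using assms(3) path_diameter_dist_commute by simp
  then have "\<And>U. openin E U \<Longrightarrow> x \<in> U \<longleftrightarrow> y \<in> U"
    using near x y assms(3) by blast
  moreover have "t0_space E"
    using covering Hausdorff_space_mtopology
    by (blast intro: arc_hedgehog_covering_t0_space Hausdorff_imp_t0_space)
  ultimately show ?thesis
    using x y unfolding t0_space_def by blast
qed

lemma Metric_space_path_diameter_dist: "Metric_space (topspace E) (path_diameter_dist E p d)"
proof
  fix x y z
  show "0 \<le> path_diameter_dist E p d x y" by (rule path_diameter_dist_nonneg)
  show "path_diameter_dist E p d x y = path_diameter_dist E p d y x"
    by (rule path_diameter_dist_commute)
  assume x: "x \<in> topspace E" and y: "y \<in> topspace E"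
  show "path_diameter_dist E p d x y = 0 \<longleftrightarrow> x = y"
    using path_diameter_dist_eq_0_imp_eq[OF x y] path_diameter_dist_self[OF x] by auto
  assume z: "z \<in> topspace E"
  show "path_diameter_dist E p d x z \<le> path_diameter_dist E p d x y + path_diameter_dist E p d y z"
  proof (rule field_le_epsilon)
    fix \<epsilon> :: real assume "\<epsilon> > 0"
    obtain r where r: "r \<in> path_diameter_bounds E p d x y" "r < path_diameter_dist E p d x y + \<epsilon> / 2"
      using path_diameter_dist_lessE[OF x y] \<open>\<epsilon> > 0\<close> by (metis half_gt_zero less_add_same_cancel1)
    obtain s where s: "s \<in> path_diameter_bounds E p d y z" "s < path_diameter_dist E p d y z + \<epsilon> / 2"
      using path_diameter_dist_lessE[OF y z] \<open>\<epsilon> > 0\<close> by (metis half_gt_zero less_add_same_cancel1)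
    have "path_diameter_dist E p d x z \<le> r + s"
      using path_diameter_dist_le[OF x z path_diameter_bounds_add[OF r(1) s(1)]] .
    then show "path_diameter_dist E p d x z \<le> path_diameter_dist E p d x y + path_diameter_dist E p d y z + \<epsilon>"
      using r(2) s(2) by linarith
  qed
qed

sublocale lifted: Metric_space "topspace E" "path_diameter_dist E p d"
  by (rule Metric_space_path_diameter_dist)

lemma openin_imp_openin_lifted_mtopology:
  assumes "openin E U"
  shows "openin lifted.mtopology U"
  unfolding lifted.openin_mtopology
proof (intro conjI allI impI)
  show "U \<subseteq> topspace E" using assms by (rule openin_subset)
  fix x assume "x \<in> U"
  then obtain \<epsilon> where "\<epsilon> > 0" "\<And>y. y \<in> topspace E \<Longrightarrow> path_diameter_dist E p d x y < \<epsilon> \<Longrightarrow> y \<in> U"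
    using path_diameter_dist_small_imp_in[OF assms] by blast
  then show "\<exists>r>0. lifted.mball x r \<subseteq> U" by auto
qed

lemma openin_lifted_mtopology_imp_openin:
  assumes lpc: "locally_path_connected_space E" and U: "openin lifted.mtopology U"
  shows "openin E U"
proof (subst openin_subopen, intro ballI)
  fix y assume "y \<in> U"
  then have y: "y \<in> topspace E" using U lifted.openin_mtopology by blast
  obtain \<epsilon> where "\<epsilon> > 0" "lifted.mball y \<epsilon> \<subseteq> U"
    using U \<open>y \<in> U\<close> lifted.openin_mtopology by blast
  define V where "V = {z \<in> topspace E. p z \<in> mball (p y) (\<epsilon> / 3)}"
  have "openin E V"
    unfolding V_def using continuous_map_p openin_mball by (rule openin_continuous_map_preimage)
  moreover have "y \<in> V" using y p_in_M[OF y] \<open>\<epsilon> > 0\<close> by (simp add: V_def)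
  ultimately obtain W where W: "openin E W" "path_connectedin E W" "y \<in> W" "W \<subseteq> V"
    using lpc unfolding locally_path_connected_space by blast
  have "d (p u) (p v) \<le> 2 * \<epsilon> / 3" if "u \<in> W" "v \<in> W" for u v
  proof -
    have "p u \<in> mball (p y) (\<epsilon> / 3)" "p v \<in> mball (p y) (\<epsilon> / 3)"
      using W(4) that by (auto simp: V_def)
    then have "p u \<in> M" "p v \<in> M" "p y \<in> M" "d (p y) (p u) < \<epsilon> / 3" "d (p y) (p v) < \<epsilon> / 3"
      by auto
    then show ?thesis
      using triangle[of "p u" "p y" "p v"] commute[of "p u" "p y"] by linarith
  qed
  then have bound: "2 * \<epsilon> / 3 \<in> path_diameter_bounds E p d y z" if "z \<in> W" for z
    unfolding path_diameter_bounds_def using W(2,3) that by blast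
  have "W \<subseteq> lifted.mball y \<epsilon>"
  proof
    fix z assume "z \<in> W"
    then have z: "z \<in> topspace E" using W(1) openin_subset by blast
    have "path_diameter_dist E p d y z \<le> 2 * \<epsilon> / 3"
      using path_diameter_dist_le[OF y z bound[OF \<open>z \<in> W\<close>]] .
    then show "z \<in> lifted.mball y \<epsilon>" using y z \<open>\<epsilon> > 0\<close> by simp
  qed
  then show "\<exists>W. openin E W \<and> y \<in> W \<and> W \<subseteq> U"
    using W(1,3) \<open>lifted.mball y \<epsilon> \<subseteq> U\<close> by blast
qed

lemma lifted_mtopology_eq:
  assumes "locally_path_connected_space E"
  shows "lifted.mtopology = E"
  unfolding topology_eq
  using openin_imp_openin_lifted_mtopology openin_lifted_mtopology_imp_openin[OF assms] by blast

end

theorem proposition3p10: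
  fixes E :: "'a topology" and B :: "'b topology" and p :: "'a \<Rightarrow> 'b"
  assumes "peano_space E" and "peano_space B"
    and "arc_hedgehog_covering E B p"
    and "metrizable_space B"
  shows "metrizable_space E"
proof -
  obtain M d where "Metric_space M d" and B: "B = Metric_space.mtopology M d"
    using assms(4) unfolding metrizable_space_def by blast
  have lpc: "locally_path_connected_space E" and "connected_space E"
    using assms(1) unfolding peano_space_def by blast+
  then have "path_connected_space E" by (simp add: path_connected_eq_connected_space)
  then interpret arc_hedgehog_covering_of_metric M d E p
    using \<open>Metric_space M d\<close> assms(3) B
    by (simp add: arc_hedgehog_covering_of_metric_def arc_hedgehog_covering_of_metric_axioms_def)
  show ?thesis
    unfolding metrizable_space_def using lifted.Metric_space_axioms lifted_mtopology_eq[OF lpc]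
    by (intro exI[of _ "topspace E"] exI[of _ "path_diameter_dist E p d"]) auto
qed

end
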